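(* Let $G=(V,E)$ be a graph and $\mathfrak d_{|S_v}(V)=\bigcup_{v\in V}\mathfrak d_{|S_v}$. Then $\mathfrak d_{|S_v}(V)^*=\delta(G)^*$.
   Context: All graphs are finite, simple and undirected. For $G=(V,E)$ and $v\in V$, $E_v$ is the set of edges incident to $v$. For two distinct adjacent edges $e=(v,u)$, $f=(v,w)$, a square spanned by $e$ and $f$ is a $4$-cycle $v,u,x,w,v$ with $x\notin\{v,u,w\}$; it is chordless if neither $(u,w)$ nor $(v,x)$ is an edge. In a chordless square $v,u,x,w$, $(x,w)$ is opposite to $(v,u)$ and $(x,u)$ is opposite to $(v,w)$ (and vice versa). The relation $\delta(G)$ on $E$: $(e,f)\in\delta(G)$ iff (i) $e,f$ are distinct adjacent edges and it is not the case that $e$ and $f$ span exactly one square and that square is chordless; or (ii) $e,f$ are opposite edges of a chordless square; or (iii) $e=f$. For a relation $R$ on $E$, $R^*$ is its transitive closure, the finest equivalence relation on $E$ containing $R$. Define $\mathfrak d_v=((E_v\times E)\cup(E\times E_v))\cap\delta(G)$ and $\mathfrak d_v^*$ the finest equivalence relation on $E$ containing $\mathfrak d_v$. Let $F_v\subseteq E\setminus E_v$ be the set of edges that are the edges not incident to $v$ of some chordless square spanned by two edges $e,e'\in E_v$ with $(e,e')\notin\mathfrak d_v^*$. The partial star product $S_v$ is the subgraph of $G$ with edge set $E_v\cup F_v$ and vertex set the endpoints of these edges. $\mathfrak d_{|S_v}=\{(e,f)\in\mathfrak d_v^*: e,f\in E(S_v)\}$. *)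

theory Defs
  imports Main
begin

definition simple_graph :: "'a set \<Rightarrow> 'a set set \<Rightarrow> bool" where
  "simple_graph V E \<longleftrightarrow> finite V \<and>
     (\<forall>e\<in>E. \<exists>u v. e = {u, v} \<and> u \<noteq> v \<and> u \<in> V \<and> v \<in> V)"

definition incident_edges :: "'a set set \<Rightarrow> 'a \<Rightarrow> 'a set set" where
  "incident_edges E v = {e \<in> E. v \<in> e}"

definition equiv_closure :: "'b set \<Rightarrow> ('b \<times> 'b) set \<Rightarrow> ('b \<times> 'b) set" where
  "equiv_closure A R = \<Inter>{S. equiv A S \<and> R \<subseteq> S}"

definition adjacent_edges :: "'a set \<Rightarrow> 'a set \<Rightarrow> bool" where
  "adjacent_edges e f \<longleftrightarrow> e \<noteq> f \<and> e \<inter> f \<noteq> {}"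

definition squares :: "'a set set \<Rightarrow> 'a set \<Rightarrow> 'a set \<Rightarrow> ('a \<times> 'a \<times> 'a \<times> 'a) set" where
  "squares E e f = {(v, u, x, w). e = {v, u} \<and> f = {v, w} \<and> distinct [v, u, x, w] \<and>
      e \<in> E \<and> f \<in> E \<and> {u, x} \<in> E \<and> {x, w} \<in> E}"

definition chordless :: "'a set set \<Rightarrow> ('a \<times> 'a \<times> 'a \<times> 'a) \<Rightarrow> bool" where
  "chordless E sq = (case sq of (v, u, x, w) \<Rightarrow> {u, w} \<notin> E \<and> {v, x} \<notin> E)"

text \<open>e and f are opposite edges of a chordless square a,b,c,d (opposite pairs ab/cd, bc/da;
  the second pair is covered by rotating the quantified cycle).\<close>
definition opposite_edges :: "'a set set \<Rightarrow> 'a set \<Rightarrow> 'a set \<Rightarrow> bool" where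
  "opposite_edges E e f \<longleftrightarrow> (\<exists>a b c d. distinct [a, b, c, d] \<and>
      {a, b} \<in> E \<and> {b, c} \<in> E \<and> {c, d} \<in> E \<and> {d, a} \<in> E \<and>
      {a, c} \<notin> E \<and> {b, d} \<notin> E \<and> e = {a, b} \<and> f = {c, d})"

definition delta :: "'a set set \<Rightarrow> ('a set \<times> 'a set) set" where
  "delta E = {(e, f). e \<in> E \<and> f \<in> E \<and>
     ((adjacent_edges e f \<and>
        \<not> (card (squares E e f) = 1 \<and> (\<forall>sq \<in> squares E e f. chordless E sq)))
      \<or> opposite_edges E e f \<or> e = f)}"

definition dv :: "'a set set \<Rightarrow> 'a \<Rightarrow> ('a set \<times> 'a set) set" where
  "dv E v = ((incident_edges E v \<times> E) \<union> (E \<times> incident_edges E v)) \<inter> delta E"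

definition dv_star :: "'a set set \<Rightarrow> 'a \<Rightarrow> ('a set \<times> 'a set) set" where
  "dv_star E v = equiv_closure E (dv E v)"

definition Fv :: "'a set set \<Rightarrow> 'a \<Rightarrow> 'a set set" where
  "Fv E v = {g \<in> E - incident_edges E v. \<exists>u x w.
      (v, u, x, w) \<in> squares E {v, u} {v, w} \<and> chordless E (v, u, x, w) \<and>
      ({v, u}, {v, w}) \<notin> dv_star E v \<and> (g = {u, x} \<or> g = {x, w})}"

definition star_edges :: "'a set set \<Rightarrow> 'a \<Rightarrow> 'a set set" where
  "star_edges E v = incident_edges E v \<union> Fv E v"

definition d_restr :: "'a set set \<Rightarrow> 'a \<Rightarrow> ('a set \<times> 'a set) set" where
  "d_restr E v = {(e, f) \<in> dv_star E v. e \<in> star_edges E v \<and> f \<in> star_edges E v}"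

end

theory Submission
  imports Defs
begin

text \<open>Each relation \<open>d_restr E v\<close> lies in \<open>dv_star E v\<close>, which is generated by pairs of
  \<open>delta E\<close>; so one inclusion is immediate. For the other, adjacent edges with common vertex
  \<open>v\<close> are already related in \<open>d_restr E v\<close>. For opposite edges \<open>ab\<close>, \<open>cd\<close> of a chordless
  square \<open>a,b,c,d\<close> there is a dichotomy at the corner \<open>a\<close>: either \<open>ab\<close> and \<open>ad\<close> are
  \<open>dv_star E a\<close>-related, or \<open>cd\<close> belongs to \<open>Fv E a\<close> and the pair lies in \<open>d_restr E a\<close>.
  The same dichotomy at the corner \<open>d\<close> relates \<open>ad\<close> with \<open>cd\<close> or \<open>cd\<close> with \<open>ab\<close>, and
  in every combination \<open>ab\<close> and \<open>cd\<close> end up in one class.\<close>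

lemma equiv_equiv_closure:
  assumes "R \<subseteq> A \<times> A"
  shows "equiv A (equiv_closure A R)"
proof -
  have top: "A \<times> A \<in> {S. equiv A S \<and> R \<subseteq> S}"
    using assms by (auto simp: equiv_def refl_on_def sym_def trans_def)
  show ?thesis
    unfolding equiv_closure_def
  proof (rule equivI)
    show "\<Inter>{S. equiv A S \<and> R \<subseteq> S} \<subseteq> A \<times> A" using top by blast
    show "refl_on A (\<Inter>{S. equiv A S \<and> R \<subseteq> S})"
      unfolding refl_on_def equiv_def by blast
    show "sym (\<Inter>{S. equiv A S \<and> R \<subseteq> S})"
      unfolding sym_def equiv_def by blast
    show "trans (\<Inter>{S. equiv A S \<and> R \<subseteq> S})"
      unfolding trans_def equiv_def by blast
  qed
qed

lemma subset_equiv_closure: "R \<subseteq> A \<times> A \<Longrightarrow> R \<subseteq> equiv_closure A R"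
  unfolding equiv_closure_def by blast

lemma equiv_closure_least: "equiv A S \<Longrightarrow> R \<subseteq> S \<Longrightarrow> equiv_closure A R \<subseteq> S"
  unfolding equiv_closure_def by blast

lemma equiv_closure_subset_carrier: "R \<subseteq> A \<times> A \<Longrightarrow> equiv_closure A R \<subseteq> A \<times> A"
  using equiv_equiv_closure[of R A] by (auto simp: equiv_def refl_on_def)

lemma equiv_closure_subset_equiv_closure:
  assumes "S \<subseteq> A \<times> A" and "R \<subseteq> equiv_closure A S"
  shows "equiv_closure A R \<subseteq> equiv_closure A S"
  using equiv_closure_least[OF equiv_equiv_closure[OF assms(1)] assms(2)] .

lemma simple_graph_edge_vertex: "simple_graph V E \<Longrightarrow> e \<in> E \<Longrightarrow> a \<in> e \<Longrightarrow> a \<in> V"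
  unfolding simple_graph_def by fastforce

lemma delta_subset: "delta E \<subseteq> E \<times> E"
  unfolding delta_def by auto

lemma dv_subset_delta: "dv E v \<subseteq> delta E"
  unfolding dv_def by auto

lemma dv_subset_dv_star: "dv E v \<subseteq> dv_star E v"
  unfolding dv_star_def by (rule subset_equiv_closure[OF order_trans[OF dv_subset_delta delta_subset]])

lemma dv_star_subset_equiv_closure_delta: "dv_star E v \<subseteq> equiv_closure E (delta E)"
  unfolding dv_star_def
  by (rule equiv_closure_least[OF equiv_equiv_closure[OF delta_subset]])
     (rule order_trans[OF dv_subset_delta subset_equiv_closure[OF delta_subset]])

lemma d_restr_subset_dv_star: "d_restr E v \<subseteq> dv_star E v"
  unfolding d_restr_def by auto

lemma d_restr_subset: "d_restr E v \<subseteq> E \<times> E"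
  by (rule order_trans[OF d_restr_subset_dv_star order_trans[OF
        dv_star_subset_equiv_closure_delta equiv_closure_subset_carrier[OF delta_subset]]])

lemma d_restr_incidentI:
  assumes "(e, f) \<in> dv_star E v" "e \<in> E" "f \<in> E" "v \<in> e" "v \<in> f"
  shows "(e, f) \<in> d_restr E v"
  using assms unfolding d_restr_def star_edges_def incident_edges_def by auto

lemma chordless_square_opposite_edges:
  assumes "(v, u, x, w) \<in> squares E {v, u} {v, w}" "chordless E (v, u, x, w)"
  shows "opposite_edges E {v, u} {x, w}"
  using assms unfolding squares_def chordless_def opposite_edges_def
  by (intro exI[of _ v] exI[of _ u] exI[of _ x] exI[of _ w]) (auto simp: insert_commute)

lemma chordless_square_d_restr_cases:
  assumes sq: "(v, u, x, w) \<in> squares E {v, u} {v, w}" and chl: "chordless E (v, u, x, w)"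
  shows "({v, u}, {v, w}) \<in> d_restr E v \<or> ({v, u}, {x, w}) \<in> d_restr E v"
proof (cases "({v, u}, {v, w}) \<in> dv_star E v")
  case True
  with sq show ?thesis
    unfolding squares_def by (auto intro: d_restr_incidentI)
next
  case False
  have edges: "{v, u} \<in> E" "{x, w} \<in> E" "v \<notin> {x, w}"
    using sq unfolding squares_def by auto
  have "{x, w} \<in> Fv E v"
    using sq chl False edges unfolding Fv_def incident_edges_def by blast
  then have star: "{x, w} \<in> star_edges E v" "{v, u} \<in> star_edges E v"
    using edges unfolding star_edges_def incident_edges_def by auto
  have "({v, u}, {x, w}) \<in> delta E"
    using chordless_square_opposite_edges[OF sq chl] edges unfolding delta_def by blast
  then have "({v, u}, {x, w}) \<in> dv E v"
    using edges unfolding dv_def incident_edges_def by blast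
  then show ?thesis
    using dv_subset_dv_star[of E v] star unfolding d_restr_def by blast
qed

lemma opposite_edges_chordless_squares:
  assumes "opposite_edges E e f"
  obtains a b c d where "e = {a, b}" "f = {c, d}"
    "(a, b, c, d) \<in> squares E {a, b} {a, d}" "chordless E (a, b, c, d)"
    "(d, c, b, a) \<in> squares E {d, c} {d, a}" "chordless E (d, c, b, a)"
proof -
  obtain a b c d where "distinct [a, b, c, d]"
    "{a, b} \<in> E" "{b, c} \<in> E" "{c, d} \<in> E" "{d, a} \<in> E"
    "{a, c} \<notin> E" "{b, d} \<notin> E" "e = {a, b}" "f = {c, d}"
    using assms unfolding opposite_edges_def by blast
  then show thesis
    by (intro that[of a b c d]) (auto simp: squares_def chordless_def insert_commute)
qed

context
  fixes V :: "'a set" and E :: "'a set set" and L :: "('a set \<times> 'a set) set"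
  assumes graph: "simple_graph V E"
    and equiv_L: "equiv E L"
    and d_restr_L: "\<And>v. v \<in> V \<Longrightarrow> d_restr E v \<subseteq> L"
begin

lemma adjacent_delta_mem_L:
  assumes "(e, f) \<in> delta E" "adjacent_edges e f"
  shows "(e, f) \<in> L"
proof -
  obtain v where v: "v \<in> e" "v \<in> f"
    using assms(2) unfolding adjacent_edges_def by blast
  have E: "e \<in> E" "f \<in> E" using assms(1) delta_subset by blast+
  have "(e, f) \<in> dv E v"
    using assms(1) E v unfolding dv_def incident_edges_def by blast
  then have "(e, f) \<in> d_restr E v"
    using dv_subset_dv_star[of E v] E v by (blast intro: d_restr_incidentI)
  then show ?thesis
    using d_restr_L simple_graph_edge_vertex[OF graph E(1) v(1)] by blast
qed

lemma opposite_edges_mem_L: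
  assumes "opposite_edges E e f"
  shows "(e, f) \<in> L"
proof -
  obtain a b c d where ef: "e = {a, b}" "f = {c, d}"
    and sq_a: "(a, b, c, d) \<in> squares E {a, b} {a, d}" "chordless E (a, b, c, d)"
    and sq_d: "(d, c, b, a) \<in> squares E {d, c} {d, a}" "chordless E (d, c, b, a)"
    using opposite_edges_chordless_squares[OF assms] by blast
  have "a \<in> V" "d \<in> V"
    using sq_a(1) simple_graph_edge_vertex[OF graph] unfolding squares_def by auto
  then have at_a: "(e, {a, d}) \<in> L \<or> (e, f) \<in> L"
    and at_d: "(f, {d, a}) \<in> L \<or> (f, {b, a}) \<in> L"
    using chordless_square_d_restr_cases[OF sq_a] chordless_square_d_restr_cases[OF sq_d]
      d_restr_L ef by (auto simp: insert_commute)
  have sym: "sym L" and trans: "trans L" using equiv_L unfolding equiv_def by auto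
  have "{d, a} = {a, d}" "{b, a} = e" using ef by auto
  then show ?thesis
    using at_a at_d symD[OF sym] transD[OF trans] by metis
qed

lemma delta_subset_L: "delta E \<subseteq> L"
proof (rule subrelI)
  fix e f assume ef: "(e, f) \<in> delta E"
  then have "e \<in> E" using delta_subset by blast
  then have "(e, e) \<in> L" using equiv_L unfolding equiv_def refl_on_def by blast
  with ef show "(e, f) \<in> L"
    using adjacent_delta_mem_L opposite_edges_mem_L unfolding delta_def by auto
qed

end

theorem theorem3p9:
  fixes V :: "'a set" and E :: "'a set set"
  assumes "simple_graph V E"
  shows "equiv_closure E (\<Union>v\<in>V. d_restr E v) = equiv_closure E (delta E)"
proof
  have carrier: "(\<Union>v\<in>V. d_restr E v) \<subseteq> E \<times> E"
    using d_restr_subset by (rule UN_least)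
  have "(\<Union>v\<in>V. d_restr E v) \<subseteq> equiv_closure E (delta E)"
    by (rule UN_least, rule order_trans[OF d_restr_subset_dv_star dv_star_subset_equiv_closure_delta])
  then show "equiv_closure E (\<Union>v\<in>V. d_restr E v) \<subseteq> equiv_closure E (delta E)"
    by (rule equiv_closure_subset_equiv_closure[OF delta_subset])
  have "delta E \<subseteq> equiv_closure E (\<Union>v\<in>V. d_restr E v)"
    by (rule delta_subset_L[OF assms equiv_equiv_closure[OF carrier]])
       (rule order_trans[OF UN_upper subset_equiv_closure[OF carrier]])
  then show "equiv_closure E (delta E) \<subseteq> equiv_closure E (\<Union>v\<in>V. d_restr E v)"
    by (rule equiv_closure_subset_equiv_closure[OF carrier])
qed

end
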